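(* For all integers $d\geq 2$ and $\Delta\geq 2$, there exists a connected bipartite graph $G$ with $\mathrm{diam}(G)=d$ and $\Delta(G)=\Delta$ such that $G$ admits an interval edge coloring (i.e. $G\in\mathfrak{N}$) and $W(G)=d(\Delta-1)+1$.
   Context: All graphs are finite, undirected, without loops or multiple edges. $\Delta(G)$ denotes the maximum degree of $G$ and $\mathrm{diam}(G)$ its diameter. For a positive integer $t$, an interval $t$-coloring of a graph $G$ is a map assigning to each edge of $G$ a color from $\{1,2,\ldots,t\}$ such that every color $i\in\{1,\ldots,t\}$ is used on at least one edge, edges sharing a vertex receive distinct colors, and for each vertex $v$ the set of colors of edges incident to $v$ is an interval of consecutive integers. $\mathfrak{N}$ denotes the set of graphs that admit an interval $t$-coloring for some $t$, and for $G\in\mathfrak{N}$, $W(G)$ denotes the greatest $t$ for which $G$ has an interval $t$-coloring. *)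

theory Defs
  imports Main
begin

definition simple_graph :: "'a set \<Rightarrow> 'a set set \<Rightarrow> bool" where
  "simple_graph V E \<longleftrightarrow> finite V \<and>
     (\<forall>e\<in>E. \<exists>u v. e = {u, v} \<and> u \<noteq> v \<and> u \<in> V \<and> v \<in> V)"

definition degree :: "'a set set \<Rightarrow> 'a \<Rightarrow> nat" where
  "degree E v = card {e\<in>E. v \<in> e}"

definition max_degree :: "'a set \<Rightarrow> 'a set set \<Rightarrow> nat" where
  "max_degree V E = Max (degree E ` V)"

text \<open>A walk of length (length xs - 1) given as the vertex list xs.\<close>
definition is_walk :: "'a set \<Rightarrow> 'a set set \<Rightarrow> 'a list \<Rightarrow> bool" where
  "is_walk V E xs \<longleftrightarrow> xs \<noteq> [] \<and> set xs \<subseteq> V \<and>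
     (\<forall>i. Suc i < length xs \<longrightarrow> {xs ! i, xs ! Suc i} \<in> E)"

definition connected_graph :: "'a set \<Rightarrow> 'a set set \<Rightarrow> bool" where
  "connected_graph V E \<longleftrightarrow> V \<noteq> {} \<and>
     (\<forall>u\<in>V. \<forall>v\<in>V. \<exists>xs. is_walk V E xs \<and> hd xs = u \<and> last xs = v)"

definition graph_dist :: "'a set \<Rightarrow> 'a set set \<Rightarrow> 'a \<Rightarrow> 'a \<Rightarrow> nat" where
  "graph_dist V E u v = (LEAST n. \<exists>xs. is_walk V E xs \<and> hd xs = u \<and> last xs = v
                                    \<and> length xs = Suc n)"

definition diam :: "'a set \<Rightarrow> 'a set set \<Rightarrow> nat" where
  "diam V E = Max {graph_dist V E u v | u v. u \<in> V \<and> v \<in> V}"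

definition bipartite :: "'a set \<Rightarrow> 'a set set \<Rightarrow> bool" where
  "bipartite V E \<longleftrightarrow> (\<exists>A B. A \<union> B = V \<and> A \<inter> B = {} \<and>
     (\<forall>e\<in>E. \<exists>a\<in>A. \<exists>b\<in>B. e = {a, b}))"

definition interval_coloring :: "'a set \<Rightarrow> 'a set set \<Rightarrow> nat \<Rightarrow> ('a set \<Rightarrow> nat) \<Rightarrow> bool" where
  "interval_coloring V E t c \<longleftrightarrow>
     (\<forall>e\<in>E. c e \<in> {1..t}) \<and>
     (\<forall>i\<in>{1..t}. \<exists>e\<in>E. c e = i) \<and>
     (\<forall>e\<in>E. \<forall>e'\<in>E. e \<noteq> e' \<and> e \<inter> e' \<noteq> {} \<longrightarrow> c e \<noteq> c e') \<and>
     (\<forall>v\<in>V. \<forall>i j k. i \<le> j \<and> j \<le> k \<and> i \<in> c ` {e\<in>E. v \<in> e}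
            \<and> k \<in> c ` {e\<in>E. v \<in> e} \<longrightarrow> j \<in> c ` {e\<in>E. v \<in> e})"

definition has_interval_coloring :: "'a set \<Rightarrow> 'a set set \<Rightarrow> nat \<Rightarrow> bool" where
  "has_interval_coloring V E t \<longleftrightarrow> t \<ge> 1 \<and> (\<exists>c. interval_coloring V E t c)"

definition interval_colorable :: "'a set \<Rightarrow> 'a set set \<Rightarrow> bool" where
  "interval_colorable V E \<longleftrightarrow> (\<exists>t. has_interval_coloring V E t)"

definition W :: "'a set \<Rightarrow> 'a set set \<Rightarrow> nat" where
  "W V E = (GREATEST t. has_interval_coloring V E t)"

end

theory Submission
  imports Defs
begin

text \<open>
  Upper bound: in an interval colouring the colours at a vertex v form an interval of at most
  deg v colours, so along a walk the colour can grow by at most \<Delta> - 1 per vertex. In a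
  bipartite graph the two ends of the edge coloured t lie at distances of different parity
  from an end of the edge coloured 1, so one of them is at distance at most diam - 1, whence
  t \<le> diam (\<Delta> - 1) + 1.

  Sharpness: with k = \<Delta> - 1 and N = (d - 1) k + 1, take left vertices x and right vertices y
  in {1..N} and, for each colour c \<in> {1..N + k}, join x and y by an edge of colour c when both
  lie in the window [max 1 (c - k), min N c] and x + y is the sum of its two ends. Every vertex x
  then sees exactly the colours x, ..., x + k, so this is an interval (N + k)-colouring of a
  (k + 1)-regular bipartite graph, and N + k = d (\<Delta> - 1) + 1. Any two vertices are joined by a
  walk with at most d edges, and the upper bound forces the diameter to be exactly d.
\<close>

section \<open>The upper bound for bipartite graphs\<close>

lemma simple_graph_edge_subset: "simple_graph V E \<Longrightarrow> e \<in> E \<Longrightarrow> e \<subseteq> V"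
  unfolding simple_graph_def by fastforce

lemma simple_graph_finite_edges:
  assumes "simple_graph V E"
  shows "finite E"
proof (rule finite_subset)
  show "E \<subseteq> Pow V" using simple_graph_edge_subset[OF assms] by blast
  show "finite (Pow V)" using assms unfolding simple_graph_def by simp
qed

lemma degree_le_max_degree: "finite V \<Longrightarrow> v \<in> V \<Longrightarrow> degree E v \<le> max_degree V E"
  unfolding max_degree_def by simp

lemma is_walk_snoc:
  assumes "is_walk V E xs" "{last xs, y} \<in> E" "y \<in> V"
  shows "is_walk V E (xs @ [y])"
  unfolding is_walk_def
proof (intro conjI allI impI)
  fix i assume i: "Suc i < length (xs @ [y])"
  show "{(xs @ [y]) ! i, (xs @ [y]) ! Suc i} \<in> E"
  proof (cases "Suc i < length xs")
    case False
    with i have "i = length xs - 1" "xs \<noteq> []" by auto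
    then show ?thesis using assms(2) by (simp add: nth_append last_conv_nth)
  qed (use assms(1) in \<open>auto simp: is_walk_def nth_append\<close>)
qed (use assms in \<open>auto simp: is_walk_def\<close>)

lemma walk_alternates:
  assumes "A \<union> B = V" "A \<inter> B = {}" "\<forall>e\<in>E. \<exists>a\<in>A. \<exists>b\<in>B. e = {a, b}"
    and "is_walk V E xs" "i < length xs"
  shows "xs ! i \<in> A \<longleftrightarrow> (hd xs \<in> A \<longleftrightarrow> even i)"
  using assms(5)
proof (induction i)
  case 0
  then show ?case by (simp add: hd_conv_nth)
next
  case (Suc i)
  then have "{xs ! i, xs ! Suc i} \<in> E" using assms(4) unfolding is_walk_def by blast
  then obtain a b where "a \<in> A" "b \<in> B" "{xs ! i, xs ! Suc i} = {a, b}" using assms(3) by blast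
  moreover have "b \<notin> A" using \<open>b \<in> B\<close> assms(2) by blast
  ultimately have "xs ! Suc i \<in> A \<longleftrightarrow> xs ! i \<notin> A" by (auto simp: doubleton_eq_iff)
  with Suc show ?case by simp
qed

lemma graph_dist_le_walk:
  assumes "is_walk V E xs" "hd xs = u" "last xs = v"
  shows "graph_dist V E u v \<le> length xs - 1"
proof -
  have "length xs = Suc (length xs - 1)" using assms(1) unfolding is_walk_def by simp
  then show ?thesis unfolding graph_dist_def using assms by (intro Least_le) blast
qed

lemma graph_dist_walk:
  assumes "connected_graph V E" "u \<in> V" "v \<in> V"
  obtains xs where "is_walk V E xs" "hd xs = u" "last xs = v" "length xs = Suc (graph_dist V E u v)"
proof -
  obtain xs where "is_walk V E xs" "hd xs = u" "last xs = v"
    using assms unfolding connected_graph_def by blast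
  then have "\<exists>n xs. is_walk V E xs \<and> hd xs = u \<and> last xs = v \<and> length xs = Suc n"
    by (metis Suc_pred is_walk_def length_greater_0_conv)
  then have "\<exists>xs. is_walk V E xs \<and> hd xs = u \<and> last xs = v \<and> length xs = Suc (graph_dist V E u v)"
    unfolding graph_dist_def by (rule LeastI_ex)
  then show ?thesis using that by blast
qed

lemma finite_graph_dists:
  "finite V \<Longrightarrow> finite {graph_dist V E u v | u v. u \<in> V \<and> v \<in> V}"
  by (rule finite_image_set2) simp_all

lemma graph_dist_le_diam: "finite V \<Longrightarrow> u \<in> V \<Longrightarrow> v \<in> V \<Longrightarrow> graph_dist V E u v \<le> diam V E"
  unfolding diam_def by (rule Max_ge[OF finite_graph_dists]) blast+

lemma diam_le:
  assumes "finite V" "V \<noteq> {}"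
    and "\<And>u v. u \<in> V \<Longrightarrow> v \<in> V \<Longrightarrow> \<exists>xs. is_walk V E xs \<and> hd xs = u \<and> last xs = v \<and> length xs \<le> Suc D"
  shows "diam V E \<le> D"
  unfolding diam_def
proof (subst Max_le_iff[OF finite_graph_dists[OF assms(1)]])
  show "{graph_dist V E u v |u v. u \<in> V \<and> v \<in> V} \<noteq> {}" using assms(2) by blast
  show "\<forall>n\<in>{graph_dist V E u v |u v. u \<in> V \<and> v \<in> V}. n \<le> D"
    using assms(3) graph_dist_le_walk by fastforce
qed

lemma interval_coloring_uses_colour:
  "interval_coloring V E t c \<Longrightarrow> i \<in> {1..t} \<Longrightarrow> \<exists>e\<in>E. c e = i"
  unfolding interval_coloring_def by (elim conjE) (rule bspec)

lemma interval_coloring_colours_interval: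
  assumes "interval_coloring V E t c" "v \<in> V" "i \<le> j" "j \<le> k"
    "i \<in> c ` {e\<in>E. v \<in> e}" "k \<in> c ` {e\<in>E. v \<in> e}"
  shows "j \<in> c ` {e\<in>E. v \<in> e}"
proof -
  have "\<forall>v\<in>V. \<forall>i j k. i \<le> j \<and> j \<le> k \<and> i \<in> c ` {e\<in>E. v \<in> e}
          \<and> k \<in> c ` {e\<in>E. v \<in> e} \<longrightarrow> j \<in> c ` {e\<in>E. v \<in> e}"
    using assms(1) unfolding interval_coloring_def by (elim conjE)
  then show ?thesis using assms(2-) by blast
qed

lemma interval_coloring_colours_at_vertex:
  assumes ic: "interval_coloring V E t c" and fin: "finite E" and v: "v \<in> V"
    and e: "e \<in> E" "v \<in> e" and e': "e' \<in> E" "v \<in> e'"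
  shows "c e' \<le> c e + (degree E v - 1)"
proof (cases "c e' \<le> c e")
  case False
  let ?S = "c ` {e \<in> E. v \<in> e}"
  have "c e \<in> ?S" "c e' \<in> ?S" using e e' by auto
  then have "{c e..c e'} \<subseteq> ?S"
    using interval_coloring_colours_interval[OF ic v] by auto
  then have "card {c e..c e'} \<le> card ?S" using fin by (intro card_mono) simp_all
  also have "\<dots> \<le> degree E v" unfolding degree_def using fin by (intro card_image_le) simp
  finally show ?thesis using False by simp
qed simp

lemma interval_coloring_along_walk:
  assumes ic: "interval_coloring V E t c" and fin: "finite E"
    and deg: "\<forall>v\<in>V. degree E v \<le> \<Delta>"
    and w: "is_walk V E xs" and e: "e \<in> E" "hd xs \<in> e" and e': "e' \<in> E" "last xs \<in> e'"
  shows "c e' \<le> c e + length xs * (\<Delta> - 1)"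
proof -
  have step: "c f' \<le> c f + (\<Delta> - 1)" if "v \<in> V" "f \<in> E" "v \<in> f" "f' \<in> E" "v \<in> f'" for v f f'
    using interval_coloring_colours_at_vertex[OF ic fin that] deg that(1) by fastforce
  have "c f \<le> c e + Suc i * (\<Delta> - 1)" if "i < length xs" "f \<in> E" "xs ! i \<in> f" for i f
    using that
  proof (induction i arbitrary: f)
    case 0
    have "xs \<noteq> []" "set xs \<subseteq> V" using w unfolding is_walk_def by auto
    then have "xs ! 0 = hd xs" "hd xs \<in> V" by (auto simp: hd_conv_nth)
    with 0 show ?case using step[OF _ e, of f] by simp
  next
    case (Suc i)
    let ?g = "{xs ! i, xs ! Suc i}"
    have "?g \<in> E" "xs ! Suc i \<in> V" using w Suc.prems(1) unfolding is_walk_def by auto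
    then show ?case using Suc.IH[of ?g] Suc.prems step[of "xs ! Suc i" ?g f] by auto
  qed
  moreover have "xs \<noteq> []" using w unfolding is_walk_def by simp
  ultimately have "c e' \<le> c e + Suc (length xs - 1) * (\<Delta> - 1)"
    using e' by (metis last_conv_nth diff_less length_greater_0_conv zero_less_one)
  then show ?thesis using \<open>xs \<noteq> []\<close> by simp
qed

lemma walk_to_edge_within_diam:
  assumes G: "simple_graph V E" "connected_graph V E" "bipartite V E"
    and a: "a \<in> V" and e: "e \<in> E"
  obtains zs where "is_walk V E zs" "hd zs = a" "last zs \<in> e" "length zs \<le> diam V E"
proof -
  have finV: "finite V" using G(1) unfolding simple_graph_def by blast
  obtain A B where AB: "A \<union> B = V" "A \<inter> B = {}" "\<forall>e\<in>E. \<exists>a\<in>A. \<exists>b\<in>B. e = {a, b}"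
    using G(3) unfolding bipartite_def by blast
  obtain p q where pq: "e = {p, q}" "p \<in> A" "q \<in> B" using e AB(3) by blast
  have pqV: "p \<in> V" "q \<in> V" using pq(2,3) AB(1) by blast+
  have "q \<notin> A" using pq(3) AB(2) by blast
  obtain xs where xs: "is_walk V E xs" "hd xs = a" "last xs = p" "length xs = Suc (graph_dist V E a p)"
    using graph_dist_walk[OF G(2) a pqV(1)] .
  obtain ys where ys: "is_walk V E ys" "hd ys = a" "last ys = q" "length ys = Suc (graph_dist V E a q)"
    using graph_dist_walk[OF G(2) a pqV(2)] .
  have side: "last zs \<in> A \<longleftrightarrow> (a \<in> A \<longleftrightarrow> even (length zs - 1))" if "is_walk V E zs" "hd zs = a" for zs
  proof -
    have "zs \<noteq> []" using that(1) unfolding is_walk_def by simp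
    then show ?thesis
      using walk_alternates[OF AB that(1), of "length zs - 1"] that(2) by (simp add: last_conv_nth)
  qed
  have "length xs \<noteq> length ys"
  proof
    assume "length xs = length ys"
    then show False
      using side[OF xs(1,2)] side[OF ys(1,2)] xs(3) ys(3) pq(2) \<open>q \<notin> A\<close> by simp
  qed
  moreover have "length xs \<le> Suc (diam V E)" "length ys \<le> Suc (diam V E)"
    using xs(4) ys(4) graph_dist_le_diam[OF finV a pqV(1)] graph_dist_le_diam[OF finV a pqV(2)]
    by simp_all
  ultimately have "length xs \<le> diam V E \<or> length ys \<le> diam V E" by linarith
  then show ?thesis using that xs ys pq(1) by blast
qed

theorem interval_coloring_le_diam:
  assumes G: "simple_graph V E" "connected_graph V E" "bipartite V E"
    and ic: "interval_coloring V E t c" and t: "1 \<le> t"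
  shows "t \<le> diam V E * (max_degree V E - 1) + 1"
proof -
  let ?D = "diam V E" and ?\<Delta> = "max_degree V E"
  have finV: "finite V" using G(1) unfolding simple_graph_def by blast
  obtain e1 e2 where e1: "e1 \<in> E" "c e1 = 1" and e2: "e2 \<in> E" "c e2 = t"
    using interval_coloring_uses_colour[OF ic] t by (metis atLeastAtMost_iff order_refl)
  obtain a a' where "e1 = {a, a'}" using e1(1) G(3) unfolding bipartite_def by blast
  then have a: "a \<in> e1" "a \<in> V" using simple_graph_edge_subset[OF G(1) e1(1)] by auto
  obtain zs where zs: "is_walk V E zs" "hd zs = a" "last zs \<in> e2" "length zs \<le> ?D"
    using walk_to_edge_within_diam[OF G a(2) e2(1)] .
  have "\<forall>v\<in>V. degree E v \<le> ?\<Delta>" using degree_le_max_degree[OF finV] by blast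
  from interval_coloring_along_walk[OF ic simple_graph_finite_edges[OF G(1)] this zs(1) e1(1) _ e2(1) zs(3)]
  have "t \<le> 1 + length zs * (?\<Delta> - 1)" using a(1) zs(2) e1(2) e2(2) by simp
  also have "\<dots> \<le> 1 + ?D * (?\<Delta> - 1)" using zs(4) by simp
  finally show ?thesis by simp
qed

section \<open>The band graph and its interval colouring\<close>

text \<open>Left vertex x is encoded as 2 x and right vertex y as 2 y + 1.\<close>

definition in_window :: "nat \<Rightarrow> nat \<Rightarrow> nat \<Rightarrow> nat \<Rightarrow> bool" where
  "in_window k N c s \<longleftrightarrow> 1 \<le> c \<and> c \<le> N + k \<and> max 1 (c - k) \<le> s \<and> s \<le> min N c"

definition window_sum :: "nat \<Rightarrow> nat \<Rightarrow> nat \<Rightarrow> nat" where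
  "window_sum k N c = max 1 (c - k) + min N c"

definition band_edge :: "nat \<Rightarrow> nat \<Rightarrow> nat \<Rightarrow> nat \<Rightarrow> nat set" where
  "band_edge k N c s = {2 * s, 2 * (window_sum k N c - s) + 1}"

definition band_vertices :: "nat \<Rightarrow> nat set" where
  "band_vertices N = {2..2 * N + 1}"

definition band_edges :: "nat \<Rightarrow> nat \<Rightarrow> nat set set" where
  "band_edges k N = {band_edge k N c s | c s. in_window k N c s}"

definition band_colour :: "nat \<Rightarrow> nat \<Rightarrow> nat set \<Rightarrow> nat" where
  "band_colour k N e = (THE c. \<exists>s. in_window k N c s \<and> e = band_edge k N c s)"

definition band_edge_at :: "nat \<Rightarrow> nat \<Rightarrow> nat \<Rightarrow> nat \<Rightarrow> nat set" where
  "band_edge_at k N v c =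
     band_edge k N c (if even v then v div 2 else window_sum k N c - v div 2)"

lemma window_sum_strict_mono: "k + 1 \<le> N \<Longrightarrow> strict_mono (window_sum k N)"
  unfolding strict_mono_Suc_iff window_sum_def by (auto simp: max_def min_def)

lemma band_edge_eq_iff:
  "band_edge k N c s = band_edge k N c' s' \<longleftrightarrow> s = s' \<and> window_sum k N c - s = window_sum k N c' - s'"
  unfolding band_edge_def by (auto simp: doubleton_eq_iff) presburger+

lemma in_window_mirror:
  assumes "in_window k N c s"
  shows "in_window k N c (window_sum k N c - s)" "window_sum k N c - (window_sum k N c - s) = s"
    "s \<le> window_sum k N c"
  using assms unfolding in_window_def window_sum_def by (auto simp: max_def min_def)

lemma in_window_iff:
  "1 \<le> x \<Longrightarrow> x \<le> N \<Longrightarrow> in_window k N c x \<longleftrightarrow> x \<le> c \<and> c \<le> x + k"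
  unfolding in_window_def by (simp add: max_def min_def) arith

lemma band_colour_band_edge:
  assumes N: "k + 1 \<le> N" and s: "in_window k N c s"
  shows "band_colour k N (band_edge k N c s) = c"
  unfolding band_colour_def
proof (rule the_equality)
  fix c' assume "\<exists>s'. in_window k N c' s' \<and> band_edge k N c s = band_edge k N c' s'"
  then obtain s' where s': "in_window k N c' s'" and "band_edge k N c s = band_edge k N c' s'"
    by blast
  then have "s = s' \<and> window_sum k N c - s = window_sum k N c' - s'"
    using band_edge_eq_iff by blast
  then have "window_sum k N c = window_sum k N c'"
    using in_window_mirror(3)[OF s] in_window_mirror(3)[OF s'] by arith
  then show "c' = c" using strict_mono_eq[OF window_sum_strict_mono[OF N]] by simp
qed (use s in blast)

lemma band_edge_at_incident:
  assumes N: "k + 1 \<le> N" and v: "v \<in> band_vertices N" and c: "v div 2 \<le> c" "c \<le> v div 2 + k"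
  shows "band_edge_at k N v c \<in> band_edges k N" "v \<in> band_edge_at k N v c"
    "band_colour k N (band_edge_at k N v c) = c"
proof -
  define x where "x = v div 2"
  have "1 \<le> x" "x \<le> N" using v unfolding band_vertices_def x_def by auto
  then have x: "in_window k N c x" using in_window_iff c unfolding x_def by blast
  define s where "s = (if even v then x else window_sum k N c - x)"
  have s: "in_window k N c s" using x in_window_mirror(1)[OF x] unfolding s_def by simp
  have e: "band_edge_at k N v c = band_edge k N c s" unfolding band_edge_at_def s_def x_def ..
  show "band_edge_at k N v c \<in> band_edges k N" unfolding e band_edges_def using s by blast
  show "band_colour k N (band_edge_at k N v c) = c" unfolding e using band_colour_band_edge[OF N s] .
  have "v = (if even v then 2 * x else 2 * x + 1)" unfolding x_def by simp
  then show "v \<in> band_edge_at k N v c"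
    unfolding e band_edge_def s_def using in_window_mirror(2)[OF x] by auto
qed

lemma band_edge_at_cases:
  assumes e: "e \<in> band_edges k N" and v: "v \<in> e"
  shows "v \<in> band_vertices N" "\<exists>c. v div 2 \<le> c \<and> c \<le> v div 2 + k \<and> e = band_edge_at k N v c"
proof -
  obtain c s where e: "e = band_edge k N c s" and s: "in_window k N c s"
    using e unfolding band_edges_def by blast
  let ?y = "window_sum k N c - s"
  have y: "in_window k N c ?y" "window_sum k N c - ?y = s" using in_window_mirror[OF s] by auto
  have range: "1 \<le> s" "s \<le> N" "1 \<le> ?y" "?y \<le> N" using s y(1) unfolding in_window_def by auto
  from v e have "v = 2 * s \<or> v = 2 * ?y + 1" unfolding band_edge_def by auto
  then have "v \<in> band_vertices N \<and> v div 2 \<le> c \<and> c \<le> v div 2 + k \<and> e = band_edge_at k N v c"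
  proof
    assume "v = 2 * s"
    then show ?thesis
      using range s in_window_iff[of s N k c] unfolding band_vertices_def band_edge_at_def e by auto
  next
    assume "v = 2 * ?y + 1"
    then show ?thesis
      using range y in_window_iff[of ?y N k c] unfolding band_vertices_def band_edge_at_def e by auto
  qed
  then show "v \<in> band_vertices N" "\<exists>c. v div 2 \<le> c \<and> c \<le> v div 2 + k \<and> e = band_edge_at k N v c"
    by blast+
qed

lemma band_edges_at_vertex:
  assumes N: "k + 1 \<le> N" and v: "v \<in> band_vertices N"
  shows "{e \<in> band_edges k N. v \<in> e} = band_edge_at k N v ` {v div 2..v div 2 + k}"
proof
  show "{e \<in> band_edges k N. v \<in> e} \<subseteq> band_edge_at k N v ` {v div 2..v div 2 + k}"
    using band_edge_at_cases(2)[of _ k N v] by fastforce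
qed (use band_edge_at_incident[OF N v] in auto)

lemma band_colours_at_vertex:
  assumes N: "k + 1 \<le> N" and v: "v \<in> band_vertices N"
  shows "band_colour k N ` {e \<in> band_edges k N. v \<in> e} = {v div 2..v div 2 + k}"
  unfolding band_edges_at_vertex[OF N v] image_image using band_edge_at_incident(3)[OF N v] by simp

lemma degree_band:
  assumes N: "k + 1 \<le> N" and v: "v \<in> band_vertices N"
  shows "degree (band_edges k N) v = k + 1"
proof -
  have "inj_on (band_edge_at k N v) {v div 2..v div 2 + k}"
    using band_edge_at_incident(3)[OF N v] by (metis inj_onI atLeastAtMost_iff)
  then show ?thesis unfolding degree_def band_edges_at_vertex[OF N v] by (simp add: card_image)
qed

lemma band_edge_shape:
  assumes "e \<in> band_edges k N"
  obtains x y where "e = {2 * x, 2 * y + 1}" "2 * x \<in> band_vertices N" "2 * y + 1 \<in> band_vertices N"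
proof -
  obtain c s where e: "e = band_edge k N c s" using assms unfolding band_edges_def by blast
  then have "2 * s \<in> band_vertices N" "2 * (window_sum k N c - s) + 1 \<in> band_vertices N"
    using band_edge_at_cases(1)[OF assms] unfolding band_edge_def by auto
  then show ?thesis using that e unfolding band_edge_def by blast
qed

lemma interval_coloring_band:
  assumes N: "k + 1 \<le> N"
  shows "interval_coloring (band_vertices N) (band_edges k N) (N + k) (band_colour k N)"
  unfolding interval_coloring_def
proof (intro conjI ballI allI impI)
  fix e assume "e \<in> band_edges k N"
  then obtain c s where "e = band_edge k N c s" "in_window k N c s" unfolding band_edges_def by blast
  then show "band_colour k N e \<in> {1..N + k}"
    using band_colour_band_edge[OF N] unfolding in_window_def by simp
next
  fix i assume i: "i \<in> {1..N + k}"
  then have "in_window k N i (max 1 (i - k))" using N unfolding in_window_def by auto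
  then show "\<exists>e\<in>band_edges k N. band_colour k N e = i"
    using band_colour_band_edge[OF N] unfolding band_edges_def by blast
next
  fix e e' assume e: "e \<in> band_edges k N" and e': "e' \<in> band_edges k N"
    and "e \<noteq> e' \<and> e \<inter> e' \<noteq> {}"
  then obtain v where "v \<in> e" "v \<in> e'" "e \<noteq> e'" by blast
  with band_edge_at_cases[OF e] band_edge_at_cases[OF e'] band_edge_at_incident(3)[OF N]
  show "band_colour k N e \<noteq> band_colour k N e'" by metis
next
  fix v i j l assume "v \<in> band_vertices N"
    and "i \<le> j \<and> j \<le> l \<and> i \<in> band_colour k N ` {e \<in> band_edges k N. v \<in> e}
         \<and> l \<in> band_colour k N ` {e \<in> band_edges k N. v \<in> e}"
  then show "j \<in> band_colour k N ` {e \<in> band_edges k N. v \<in> e}"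
    using band_colours_at_vertex[OF N] by auto
qed

section \<open>Short walks in the band graph\<close>

text \<open>
  \<open>linked N k x y\<close> makes left x and right y adjacent, and \<open>linked N (K + k)\<close> factors through
  \<open>linked N K\<close> and \<open>linked N k\<close>; so \<open>linked N (j * k) x z\<close> yields a walk with j edges,
  and once \<open>j * k + 1 \<ge> N\<close> it holds for all x and z.
\<close>

definition linked :: "nat \<Rightarrow> nat \<Rightarrow> nat \<Rightarrow> nat \<Rightarrow> bool" where
  "linked N K x y \<longleftrightarrow> 1 \<le> x \<and> 1 \<le> y \<and> x \<le> N \<and> y \<le> N \<and> x \<le> y + K \<and> y \<le> x + K \<and>
     (x + y \<le> K + 2 \<or> 2 * N \<le> x + y + K \<or> even (x + y + K))"

lemma linked_sym: "linked N K x y \<longleftrightarrow> linked N K y x"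
  unfolding linked_def by (auto simp: add.commute)

lemma linked_if_large: "N \<le> K + 1 \<Longrightarrow> x \<in> {1..N} \<Longrightarrow> y \<in> {1..N} \<Longrightarrow> linked N K x y"
  unfolding linked_def by auto

lemma linked_compose:
  assumes "linked N (K + k) x z"
  shows "\<exists>y. linked N K x y \<and> linked N k y z"
proof -
  have b: "1 \<le> x" "1 \<le> z" "x \<le> N" "z \<le> N" "x \<le> z + (K + k)" "z \<le> x + (K + k)"
    using assms unfolding linked_def by auto
  consider "x + z \<le> K + k + 2" | "2 * N \<le> x + z + K + k"
    | "even (x + z + K + k)" "\<not> x + z \<le> K + k + 2"
    using assms unfolding linked_def by (auto simp: add.assoc)
  then show ?thesis
  proof cases
    case 1
    show ?thesis
      by (rule exI[of _ "max 1 (max (z - k) (x - K))"]) (use b 1 in \<open>auto simp: linked_def\<close>)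
  next
    case 2
    show ?thesis
      by (rule exI[of _ "min N (min (z + k) (x + K))"]) (use b 2 in \<open>auto simp: linked_def\<close>)
  next
    case 3
    \<comment> \<open>both \<open>x - K\<close> and \<open>z - k\<close> have the parity of \<open>x + K\<close>, and one of them is positive\<close>
    then have "1 \<le> max (x - K) (z - k)" by linarith
    then show ?thesis
      by (intro exI[of _ "max (x - K) (z - k)"]) (use b 3 in \<open>auto simp: linked_def max_def\<close>)
  qed
qed

lemma band_edge_if_linked:
  assumes N: "k + 1 \<le> N" and xy: "linked N k x y"
  shows "{2 * x, 2 * y + 1} \<in> band_edges k N"
proof -
  have b: "1 \<le> x" "1 \<le> y" "x \<le> N" "y \<le> N" "x \<le> y + k" "y \<le> x + k"
    using xy unfolding linked_def by auto
  have "\<exists>c. in_window k N c x \<and> window_sum k N c = x + y"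
  proof -
    consider "x + y \<le> k + 2" | "2 * N \<le> x + y + k" "\<not> x + y \<le> k + 2"
      | "even (x + y + k)" "\<not> x + y \<le> k + 2" "\<not> 2 * N \<le> x + y + k"
      using xy unfolding linked_def by blast
    then show ?thesis
    proof cases
      case 1
      then show ?thesis using b N
        by (intro exI[of _ "x + y - 1"]) (auto simp: in_window_def window_sum_def)
    next
      case 2
      then show ?thesis using b N
        by (intro exI[of _ "x + y + k - N"]) (auto simp: in_window_def window_sum_def)
    next
      case 3
      then obtain m where "x + y + k = 2 * m" by (blast elim: evenE)
      then show ?thesis using 3 b N
        by (intro exI[of _ m]) (auto simp: in_window_def window_sum_def)
    qed
  qed
  then obtain c where "in_window k N c x" "window_sum k N c = x + y" by blast
  then have "{2 * x, 2 * y + 1} = band_edge k N c x" "in_window k N c x"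
    unfolding band_edge_def by simp_all
  then show ?thesis unfolding band_edges_def by blast
qed

lemma band_walk_if_linked:
  assumes N: "k + 1 \<le> N"
  shows "linked N (j * k) (u div 2) z \<Longrightarrow> \<exists>xs. is_walk (band_vertices N) (band_edges k N) xs \<and>
    hd xs = u \<and> last xs = 2 * z + (u + j) mod 2 \<and> length xs = Suc j"
proof (induction j arbitrary: z)
  case 0
  then have "z = u div 2" "u \<in> band_vertices N" unfolding linked_def band_vertices_def by auto
  then show ?case by (intro exI[of _ "[u]"]) (auto simp: is_walk_def)
next
  case (Suc j)
  have "linked N (j * k + k) (u div 2) z" using Suc.prems by (simp add: add.commute)
  then obtain y where y: "linked N (j * k) (u div 2) y" "linked N k y z"
    using linked_compose by blast
  obtain xs where xs: "is_walk (band_vertices N) (band_edges k N) xs" "hd xs = u"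
    "last xs = 2 * y + (u + j) mod 2" "length xs = Suc j"
    using Suc.IH[OF y(1)] by blast
  define w where "w = 2 * z + (u + Suc j) mod 2"
  have "w \<in> band_vertices N" using y(2) unfolding w_def linked_def band_vertices_def by auto
  moreover have "{last xs, w} \<in> band_edges k N"
  proof (cases "even (u + j)")
    case True
    then have "(u + j) mod 2 = 0" "(u + Suc j) mod 2 = 1" by presburger+
    then have "{last xs, w} = {2 * y, 2 * z + 1}" using xs(3) unfolding w_def by simp
    then show ?thesis using band_edge_if_linked[OF N y(2)] by simp
  next
    case False
    then have "(u + j) mod 2 = 1" "(u + Suc j) mod 2 = 0" by presburger+
    then have "{last xs, w} = {2 * z, 2 * y + 1}" using xs(3) unfolding w_def by auto
    then show ?thesis using band_edge_if_linked[OF N, of z y] y(2) linked_sym by metis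
  qed
  ultimately have walk: "is_walk (band_vertices N) (band_edges k N) (xs @ [w])"
    using is_walk_snoc[OF xs(1)] by blast
  have "xs \<noteq> []" using xs(4) by auto
  then have "hd (xs @ [w]) = u" "length (xs @ [w]) = Suc (Suc j)"
    "last (xs @ [w]) = 2 * z + (u + Suc j) mod 2"
    using xs(2,4) unfolding w_def by simp_all
  with walk show ?case by blast
qed

lemma simple_graph_band: "simple_graph (band_vertices N) (band_edges k N)"
  unfolding simple_graph_def
proof (intro conjI ballI)
  fix e assume "e \<in> band_edges k N"
  then obtain x y where "e = {2 * x, 2 * y + 1}" "2 * x \<in> band_vertices N" "2 * y + 1 \<in> band_vertices N"
    by (rule band_edge_shape)
  moreover have "2 * x \<noteq> 2 * y + 1" by presburger
  ultimately show "\<exists>u v. e = {u, v} \<and> u \<noteq> v \<and> u \<in> band_vertices N \<and> v \<in> band_vertices N"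
    by blast
qed (simp add: band_vertices_def)

lemma bipartite_band: "bipartite (band_vertices N) (band_edges k N)"
  unfolding bipartite_def
proof (intro exI conjI)
  show "\<forall>e\<in>band_edges k N. \<exists>a\<in>{v \<in> band_vertices N. even v}. \<exists>b\<in>{v \<in> band_vertices N. odd v}. e = {a, b}"
    by (metis (mono_tags, lifting) band_edge_shape dvd_triv_left even_plus_one_iff mem_Collect_eq)
qed auto

lemma max_degree_band:
  assumes "k + 1 \<le> N"
  shows "max_degree (band_vertices N) (band_edges k N) = k + 1"
proof -
  have "2 \<in> band_vertices N" using assms by (simp add: band_vertices_def)
  then have "degree (band_edges k N) ` band_vertices N = {k + 1}"
    using degree_band[OF assms] by (simp add: image_constant)
  then show ?thesis unfolding max_degree_def by simp
qed

context
  fixes d k N :: nat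
  assumes d: "2 \<le> d" and k: "1 \<le> k" and N: "N = (d - 1) * k + 1"
begin

lemma band_size: "k + 1 \<le> N"
proof -
  have "1 * k \<le> (d - 1) * k" using d by (intro mult_le_mono1) simp
  then show ?thesis unfolding N by simp
qed

lemma band_walks:
  assumes u: "u \<in> band_vertices N" and v: "v \<in> band_vertices N"
  shows "\<exists>xs. is_walk (band_vertices N) (band_edges k N) xs \<and> hd xs = u \<and> last xs = v
    \<and> length xs \<le> Suc d"
proof -
  define j where "j = (if even (u + (d - 1) + v) then d - 1 else d)"
  have j: "d - 1 \<le> j" "j \<le> d" unfolding j_def by auto
  have "(u + j) mod 2 = v mod 2"
  proof (cases "even (u + (d - 1) + v)")
    case True
    then show ?thesis unfolding j_def by (auto simp: mod_2_eq_odd)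
  next
    case False
    have "d = Suc (d - 1)" using d by simp
    then have "u + j = Suc (u + (d - 1))" using False unfolding j_def by simp
    with False show ?thesis by (auto simp: mod_2_eq_odd)
  qed
  have "(d - 1) * k \<le> j * k" using j(1) by (rule mult_le_mono1)
  moreover have "u div 2 \<in> {1..N}" "v div 2 \<in> {1..N}"
    using u v unfolding band_vertices_def by auto
  ultimately have "linked N (j * k) (u div 2) (v div 2)"
    using N by (intro linked_if_large) simp_all
  then obtain xs where "is_walk (band_vertices N) (band_edges k N) xs" "hd xs = u"
    "last xs = 2 * (v div 2) + (u + j) mod 2" "length xs = Suc j"
    using band_walk_if_linked[OF band_size] by blast
  moreover have "2 * (v div 2) + (u + j) mod 2 = v" using \<open>(u + j) mod 2 = v mod 2\<close> by simp
  ultimately show ?thesis using j(2) by auto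
qed

lemma connected_graph_band: "connected_graph (band_vertices N) (band_edges k N)"
  unfolding connected_graph_def
proof (intro conjI ballI)
  show "band_vertices N \<noteq> {}" using band_size by (auto simp: band_vertices_def)
qed (use band_walks in blast)

lemma has_interval_coloring_band: "has_interval_coloring (band_vertices N) (band_edges k N) (d * k + 1)"
proof -
  have "N + k = d * k + 1" using d unfolding N by (cases d) simp_all
  then show ?thesis
    unfolding has_interval_coloring_def using interval_coloring_band[OF band_size] by auto
qed

lemma has_interval_coloring_band_le:
  assumes "has_interval_coloring (band_vertices N) (band_edges k N) t"
  shows "t \<le> diam (band_vertices N) (band_edges k N) * k + 1"
  using assms interval_coloring_le_diam[OF simple_graph_band connected_graph_band bipartite_band]
  unfolding has_interval_coloring_def max_degree_band[OF band_size] by auto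

lemma diam_band: "diam (band_vertices N) (band_edges k N) = d"
proof (rule antisym)
  show "diam (band_vertices N) (band_edges k N) \<le> d"
    using band_size band_walks by (intro diam_le) (auto simp: band_vertices_def)
  show "d \<le> diam (band_vertices N) (band_edges k N)"
    using has_interval_coloring_band_le[OF has_interval_coloring_band] k by simp
qed

lemma W_band: "W (band_vertices N) (band_edges k N) = d * k + 1"
  unfolding W_def using has_interval_coloring_band has_interval_coloring_band_le diam_band
  by (intro Greatest_equality) auto

end

theorem theorem6:
  fixes d \<Delta> :: nat
  assumes "d \<ge> 2" and "\<Delta> \<ge> 2"
  shows "\<exists>(V :: nat set) E. simple_graph V E \<and> connected_graph V E \<and> bipartite V E \<and>
           diam V E = d \<and> max_degree V E = \<Delta> \<and>
           interval_colorable V E \<and> W V E = d * (\<Delta> - 1) + 1"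
proof -
  define k where "k = \<Delta> - 1"
  define N where "N = (d - 1) * k + 1"
  have k: "1 \<le> k" "\<Delta> = k + 1" using assms(2) unfolding k_def by auto
  note band = assms(1) k(1) N_def
  show ?thesis
  proof (intro exI conjI)
    show "max_degree (band_vertices N) (band_edges k N) = \<Delta>"
      using max_degree_band[OF band_size[OF band]] k(2) by simp
    show "interval_colorable (band_vertices N) (band_edges k N)"
      unfolding interval_colorable_def using has_interval_coloring_band[OF band] by blast
    show "W (band_vertices N) (band_edges k N) = d * (\<Delta> - 1) + 1"
      using W_band[OF band] unfolding k_def .
  qed (use simple_graph_band connected_graph_band[OF band] bipartite_band diam_band[OF band] in auto)
qed

end
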